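(* Let $G=(V,E)$ be a finite, simple, undirected, loopless graph with at least one wedge. For each vertex $v$ let $N_1(v)$ be the closed neighborhood of $v$ (the set consisting of $v$ and all vertices adjacent to $v$), let $W_v$ be the set of wedges centered at $v$ (so $|W_v|=\binom{d_v}{2}$, where $d_v$ is the degree of $v$), let $W$ be the set of all wedges, and let $p_v=|W_v|/|W|$. Let $\mathrm{cut}(S)$ denote the number of edges with exactly one endpoint in $S\subseteq V$, and let $\kappa$ be the global clustering coefficient of $G$. Then $$\sum_{v\in V} p_v\,\frac{\mathrm{cut}(N_1(v))}{|W_v|} = 2(1-\kappa),$$ where each summand $p_v\,\mathrm{cut}(N_1(v))/|W_v|$ is interpreted as $\mathrm{cut}(N_1(v))/|W|$ (which coincides with the literal expression whenever $|W_v|>0$). Equivalently, $\sum_{v\in V}\mathrm{cut}(N_1(v)) = 2(1-\kappa)|W|$.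
   Context: A wedge is an unordered pair of distinct edges sharing an endpoint, $\{(s,t),(s,u)\}$; its center is $s$. The wedge is closed if the edge $(t,u)$ is in $E$, and open otherwise. The global clustering coefficient is $\kappa = (\text{number of closed wedges})/|W|$. *)

theory Defs
  imports Complex_Main
begin

definition simple_graph :: "'a set \<Rightarrow> 'a set set \<Rightarrow> bool" where
  "simple_graph V E \<longleftrightarrow> finite V \<and> (\<forall>e\<in>E. e \<subseteq> V \<and> card e = 2)"

definition adj :: "'a set set \<Rightarrow> 'a \<Rightarrow> 'a \<Rightarrow> bool" where
  "adj E u v \<longleftrightarrow> {u, v} \<in> E"

definition degree :: "'a set set \<Rightarrow> 'a \<Rightarrow> nat" where
  "degree E v = card {e\<in>E. v \<in> e}"

definition closed_nbhd :: "'a set \<Rightarrow> 'a set set \<Rightarrow> 'a \<Rightarrow> 'a set" where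
  "closed_nbhd V E v = insert v {u\<in>V. adj E v u}"

definition wedges_at :: "'a set set \<Rightarrow> 'a \<Rightarrow> 'a set set set" where
  "wedges_at E v = {{e1, e2} | e1 e2. e1 \<in> E \<and> e2 \<in> E \<and> e1 \<noteq> e2 \<and> v \<in> e1 \<and> v \<in> e2}"

(* all wedges (as pairs (centre, wedge)), so that |W| = sum over v of |W_v| *)
definition wedges :: "'a set \<Rightarrow> 'a set set \<Rightarrow> ('a \<times> 'a set set) set" where
  "wedges V E = {(v, w). v \<in> V \<and> w \<in> wedges_at E v}"

definition closed_wedge :: "'a set set \<Rightarrow> ('a \<times> 'a set set) \<Rightarrow> bool" where
  "closed_wedge E vw = (\<exists>t u. snd vw = {{fst vw, t}, {fst vw, u}} \<and> {t, u} \<in> E)"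

definition clustering_coeff :: "'a set \<Rightarrow> 'a set set \<Rightarrow> real" where
  "clustering_coeff V E =
     real (card {w \<in> wedges V E. closed_wedge E w}) / real (card (wedges V E))"

definition cut :: "'a set set \<Rightarrow> 'a set \<Rightarrow> nat" where
  "cut E S = card {e\<in>E. card (e \<inter> S) = 1}"

end

theory Submission
  imports Defs
begin

text \<open>
  Count the ordered triples \<open>(x, v, y)\<close> in which \<open>v\<close> and \<open>y\<close> are distinct, non-adjacent
  neighbours of \<open>x\<close>. Each open wedge arises from exactly two of them (swap \<open>v\<close> and \<open>y\<close>), so there
  are \<open>2 (1 - \<kappa>) |W|\<close> of them. On the other hand \<open>(x, v, y) \<mapsto> (v, {x, y})\<close> is a bijection
  onto the pairs of a vertex \<open>v\<close> and an edge leaving \<open>N\<^sub>1(v)\<close>: the endpoint inside is the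
  neighbour \<open>x\<close> (it cannot be \<open>v\<close> itself, since the outside endpoint is not adjacent to \<open>v\<close>).
  Hence the same number is \<open>\<Sum>\<^sub>v cut(N\<^sub>1(v))\<close>.
\<close>

lemma simple_graph_edge_obtain:
  assumes "simple_graph V E" "e \<in> E" "x \<in> e"
  obtains t where "e = {x, t}" "t \<noteq> x" "t \<in> V" "x \<in> V"
proof -
  have "card e = 2" "e \<subseteq> V" using assms unfolding simple_graph_def by auto
  then obtain a b where "e = {a, b}" "a \<noteq> b" by (meson card_2_iff)
  then show ?thesis using assms(3) \<open>e \<subseteq> V\<close> that by auto
qed

lemma simple_graph_finite_vertices: "simple_graph V E \<Longrightarrow> finite V"
  unfolding simple_graph_def by simp

lemma simple_graph_finite_edges:
  assumes "simple_graph V E"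
  shows "finite E"
proof -
  have "E \<subseteq> Pow V" using assms unfolding simple_graph_def by auto
  then show ?thesis using simple_graph_finite_vertices[OF assms] by (meson finite_Pow_iff finite_subset)
qed

lemma finite_wedges:
  assumes "simple_graph V E"
  shows "finite (wedges V E)"
proof -
  have "wedges V E \<subseteq> V \<times> Pow E" unfolding wedges_def wedges_at_def by auto
  then show ?thesis using simple_graph_finite_vertices[OF assms] simple_graph_finite_edges[OF assms]
    by (meson finite_Pow_iff finite_SigmaI finite_subset)
qed

lemma adj_irrefl: "simple_graph V E \<Longrightarrow> \<not> adj E x x"
  unfolding simple_graph_def adj_def by fastforce

lemma adj_sym: "adj E x y \<longleftrightarrow> adj E y x"
  unfolding adj_def by (simp add: insert_commute)

lemma adj_in_vertices: "simple_graph V E \<Longrightarrow> adj E x y \<Longrightarrow> x \<in> V \<and> y \<in> V"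
  unfolding simple_graph_def adj_def by auto

lemma mem_closed_nbhd_iff:
  assumes "simple_graph V E"
  shows "z \<in> closed_nbhd V E v \<longleftrightarrow> z = v \<or> adj E v z"
  using adj_in_vertices[OF assms] unfolding closed_nbhd_def by auto

lemma closed_wedge_iff_adj:
  assumes G: "simple_graph V E" and xv: "adj E x v" and xy: "adj E x y" and "v \<noteq> y"
  shows "closed_wedge E (x, {{x, v}, {x, y}}) \<longleftrightarrow> adj E v y"
proof
  assume "closed_wedge E (x, {{x, v}, {x, y}})"
  then obtain t u where tu: "{{x, v}, {x, y}} = {{x, t}, {x, u}}" "{t, u} \<in> E"
    unfolding closed_wedge_def by auto
  have "x \<noteq> v" "x \<noteq> y" using xv xy adj_irrefl[OF G] by metis+
  with tu(1) \<open>v \<noteq> y\<close> have "{t, u} = {v, y}" by (auto simp: doubleton_eq_iff)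
  with tu(2) show "adj E v y" unfolding adj_def by simp
qed (auto simp: closed_wedge_def adj_def)

definition open_wedges :: "'a set \<Rightarrow> 'a set set \<Rightarrow> ('a \<times> 'a set set) set" where
  "open_wedges V E = {w \<in> wedges V E. \<not> closed_wedge E w}"

definition open_paths :: "'a set \<Rightarrow> 'a set set \<Rightarrow> ('a \<times> 'a \<times> 'a) set" where
  "open_paths V E = {(x, v, y). x \<in> V \<and> v \<in> V \<and> y \<in> V \<and>
     adj E x v \<and> adj E x y \<and> v \<noteq> y \<and> \<not> adj E v y}"

definition wedge_of_path :: "'a \<times> 'a \<times> 'a \<Rightarrow> 'a \<times> 'a set set" where
  "wedge_of_path = (\<lambda>(x, v, y). (x, {{x, v}, {x, y}}))"

definition cut_pair_of_path :: "'a \<times> 'a \<times> 'a \<Rightarrow> 'a \<times> 'a set" where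
  "cut_pair_of_path = (\<lambda>(x, v, y). (v, {x, y}))"

lemma finite_open_paths:
  assumes "simple_graph V E"
  shows "finite (open_paths V E)"
proof -
  have "open_paths V E \<subseteq> V \<times> V \<times> V" unfolding open_paths_def by auto
  then show ?thesis using simple_graph_finite_vertices[OF assms] by (meson finite_SigmaI finite_subset)
qed

lemma wedge_of_path_in_open_wedges:
  assumes G: "simple_graph V E" and "q \<in> open_paths V E"
  shows "wedge_of_path q \<in> open_wedges V E"
proof -
  obtain x v y where q: "q = (x, v, y)" and a: "x \<in> V" "adj E x v" "adj E x y" "v \<noteq> y" "\<not> adj E v y"
    using assms(2) unfolding open_paths_def by auto
  have "x \<noteq> v" using a(2) adj_irrefl[OF G] by metis
  then have "{x, v} \<noteq> {x, y}" using a(4) by (auto simp: doubleton_eq_iff)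
  moreover have "{x, v} \<in> E" "{x, y} \<in> E" using a(2,3) unfolding adj_def by auto
  ultimately have "{{x, v}, {x, y}} \<in> wedges_at E x" unfolding wedges_at_def by blast
  then show ?thesis
    using q a closed_wedge_iff_adj[OF G a(2-4)]
    unfolding open_wedges_def wedges_def wedge_of_path_def by auto
qed

lemma open_paths_fibre:
  assumes G: "simple_graph V E" and "w \<in> open_wedges V E"
  obtains x t u where "t \<noteq> u"
    "{q \<in> open_paths V E. wedge_of_path q = w} = {(x, t, u), (x, u, t)}"
proof -
  obtain x e1 e2 where w: "w = (x, {e1, e2})" "x \<in> V" "\<not> closed_wedge E w"
    and e: "e1 \<in> E" "e2 \<in> E" "e1 \<noteq> e2" "x \<in> e1" "x \<in> e2"
    using assms(2) unfolding open_wedges_def wedges_def wedges_at_def by auto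
  obtain t where t: "e1 = {x, t}" "t \<noteq> x" "t \<in> V"
    using simple_graph_edge_obtain[OF G e(1,4)] by metis
  obtain u where u: "e2 = {x, u}" "u \<noteq> x" "u \<in> V"
    using simple_graph_edge_obtain[OF G e(2,5)] by metis
  have "t \<noteq> u" using e(3) t u by auto
  have adj: "adj E x t" "adj E x u" using e t u unfolding adj_def by auto
  have "\<not> adj E t u"
    using w closed_wedge_iff_adj[OF G adj \<open>t \<noteq> u\<close>] t(1) u(1) by simp
  have "{q \<in> open_paths V E. wedge_of_path q = w} = {(x, t, u), (x, u, t)}"
  proof (intro set_eqI iffI)
    fix q assume q: "q \<in> {q \<in> open_paths V E. wedge_of_path q = w}"
    then obtain v y where qv: "q = (x, v, y)" "adj E x v" "adj E x y" "v \<noteq> y"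
      and ww: "{{x, v}, {x, y}} = {{x, t}, {x, u}}"
      using w t u unfolding open_paths_def wedge_of_path_def by auto
    have "v \<noteq> x" "y \<noteq> x" using qv(2,3) adj_irrefl[OF G] by metis+
    with ww have "v \<in> {t, u}" "y \<in> {t, u}" by (auto simp: doubleton_eq_iff)
    then show "q \<in> {(x, t, u), (x, u, t)}" using qv by auto
  next
    fix q assume "q \<in> {(x, t, u), (x, u, t)}"
    then show "q \<in> {q \<in> open_paths V E. wedge_of_path q = w}"
      using w t u adj \<open>\<not> adj E t u\<close> \<open>t \<noteq> u\<close> adj_sym[of E t u]
      unfolding open_paths_def wedge_of_path_def by (auto simp: insert_commute)
  qed
  then show ?thesis using \<open>t \<noteq> u\<close> that by blast
qed

lemma card_open_paths:
  assumes G: "simple_graph V E"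
  shows "card (open_paths V E) = 2 * card (open_wedges V E)"
proof -
  let ?fibre = "\<lambda>w. {q \<in> open_paths V E. wedge_of_path q = w}"
  have "open_paths V E = (\<Union>w \<in> open_wedges V E. ?fibre w)"
    using wedge_of_path_in_open_wedges[OF G] by auto
  also have "card \<dots> = (\<Sum>w \<in> open_wedges V E. card (?fibre w))"
  proof (rule card_UN_disjoint)
    show "finite (open_wedges V E)"
      using finite_wedges[OF G] unfolding open_wedges_def by auto
  qed (use finite_open_paths[OF G] in auto)
  also have "\<dots> = (\<Sum>w \<in> open_wedges V E. 2)"
    by (rule sum.cong) (auto elim: open_paths_fibre[OF G])
  finally show ?thesis by simp
qed

lemma bij_betw_open_paths_cut_pairs:
  assumes G: "simple_graph V E"
  shows "bij_betw cut_pair_of_path (open_paths V E)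
           (SIGMA v:V. {e \<in> E. card (e \<inter> closed_nbhd V E v) = 1})"
proof (rule bij_betw_imageI)
  show "inj_on cut_pair_of_path (open_paths V E)"
  proof (rule inj_onI)
    fix p q
    assume "p \<in> open_paths V E" "q \<in> open_paths V E" "cut_pair_of_path p = cut_pair_of_path q"
    then obtain x v y x' y' where pq: "p = (x, v, y)" "q = (x', v, y')" "{x, y} = {x', y'}"
      and "adj E x v" "\<not> adj E v y" "adj E x' v" "\<not> adj E v y'"
      unfolding open_paths_def cut_pair_of_path_def by auto
    then show "p = q" by (metis adj_sym doubleton_eq_iff)
  qed
  show "cut_pair_of_path ` open_paths V E = (SIGMA v:V. {e \<in> E. card (e \<inter> closed_nbhd V E v) = 1})"
  proof (intro set_eqI iffI)
    fix q assume "q \<in> cut_pair_of_path ` open_paths V E"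
    then obtain x v y where q: "q = (v, {x, y})"
      and a: "adj E x v" "adj E x y" "v \<noteq> y" "\<not> adj E v y" "v \<in> V"
      unfolding open_paths_def cut_pair_of_path_def by auto
    have "x \<noteq> y" using a(1,4) adj_sym by metis
    with a have "{x, y} \<inter> closed_nbhd V E v = {x}"
      using mem_closed_nbhd_iff[OF G] adj_sym[of E x v] by auto
    then show "q \<in> (SIGMA v:V. {e \<in> E. card (e \<inter> closed_nbhd V E v) = 1})"
      using q a(2,5) unfolding adj_def by auto
  next
    fix q assume "q \<in> (SIGMA v:V. {e \<in> E. card (e \<inter> closed_nbhd V E v) = 1})"
    then obtain v e where q: "q = (v, e)" "v \<in> V" "e \<in> E" "card (e \<inter> closed_nbhd V E v) = 1"
      by auto
    then obtain a where inside: "e \<inter> closed_nbhd V E v = {a}" by (meson card_1_singletonE)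
    then obtain b where b: "e = {a, b}" "b \<noteq> a" "b \<in> V" "a \<in> V"
      using simple_graph_edge_obtain[OF G q(3)] by blast
    have "a = v \<or> adj E v a" "b \<noteq> v" "\<not> adj E v b"
      using inside b mem_closed_nbhd_iff[OF G] by auto
    moreover have "adj E a b" using q(3) b unfolding adj_def by simp
    ultimately have "adj E a v" using adj_sym by metis
    with b q \<open>adj E a b\<close> \<open>b \<noteq> v\<close> \<open>\<not> adj E v b\<close> have "(a, v, b) \<in> open_paths V E"
      unfolding open_paths_def by auto
    moreover have "cut_pair_of_path (a, v, b) = q" unfolding cut_pair_of_path_def using q b by simp
    ultimately show "q \<in> cut_pair_of_path ` open_paths V E" by force
  qed
qed

lemma sum_cut_closed_nbhd:
  assumes G: "simple_graph V E"
  shows "(\<Sum>v\<in>V. cut E (closed_nbhd V E v)) = 2 * card (open_wedges V E)"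
proof -
  have "(\<Sum>v\<in>V. cut E (closed_nbhd V E v))
      = card (SIGMA v:V. {e \<in> E. card (e \<inter> closed_nbhd V E v) = 1})"
    using simple_graph_finite_vertices[OF G] simple_graph_finite_edges[OF G]
    unfolding cut_def by (simp add: card_SigmaI)
  also have "\<dots> = card (open_paths V E)"
    using bij_betw_same_card[OF bij_betw_open_paths_cut_pairs[OF G]] by simp
  finally show ?thesis using card_open_paths[OF G] by simp
qed

lemma card_wedges_eq_closed_plus_open:
  assumes "simple_graph V E"
  shows "card (wedges V E) = card {w \<in> wedges V E. closed_wedge E w} + card (open_wedges V E)"
proof -
  have "wedges V E = {w \<in> wedges V E. closed_wedge E w} \<union> open_wedges V E"
    unfolding open_wedges_def by auto
  also have "card \<dots> = card {w \<in> wedges V E. closed_wedge E w} + card (open_wedges V E)"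
    using finite_wedges[OF assms] unfolding open_wedges_def by (intro card_Un_disjoint) auto
  finally show ?thesis .
qed

theorem lemma1:
  fixes V :: "'a set" and E :: "'a set set"
  assumes "simple_graph V E"
    and "wedges V E \<noteq> {}"
  defines "p \<equiv> \<lambda>v. real (card (wedges_at E v)) / real (card (wedges V E))"
  shows "((\<Sum>v\<in>V. if card (wedges_at E v) = 0
              then real (cut E (closed_nbhd V E v)) / real (card (wedges V E))
              else p v * real (cut E (closed_nbhd V E v)) / real (card (wedges_at E v)))
           = 2 * (1 - clustering_coeff V E))
         \<and> (real (\<Sum>v\<in>V. cut E (closed_nbhd V E v))
           = 2 * (1 - clustering_coeff V E) * real (card (wedges V E)))"
proof -
  define W where "W = real (card (wedges V E))"
  have "W > 0" using assms(2) finite_wedges[OF assms(1)] unfolding W_def by (simp add: card_gt_0_iff)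
  have sum_cut: "real (\<Sum>v\<in>V. cut E (closed_nbhd V E v)) = 2 * (1 - clustering_coeff V E) * W"
    using sum_cut_closed_nbhd[OF assms(1)] card_wedges_eq_closed_plus_open[OF assms(1)] \<open>W > 0\<close>
    unfolding clustering_coeff_def W_def by (simp add: field_simps)
  have "(\<Sum>v\<in>V. if card (wedges_at E v) = 0
              then real (cut E (closed_nbhd V E v)) / real (card (wedges V E))
              else p v * real (cut E (closed_nbhd V E v)) / real (card (wedges_at E v)))
        = (\<Sum>v\<in>V. real (cut E (closed_nbhd V E v)) / W)"
    by (rule sum.cong) (auto simp: p_def W_def)
  also have "\<dots> = 2 * (1 - clustering_coeff V E)"
    using sum_cut \<open>W > 0\<close> by (simp flip: sum_divide_distrib)
  finally show ?thesis using sum_cut unfolding W_def by simp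
qed

end
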